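(* Let $\alpha\neq\beta$ and let $(g_n)$ be as in the context. For $n\ge1$ write $$g_n(x)=\sum_{k=0}^{n-1}A_k^{(n)}(\alpha-\beta)^{-k}(x-\beta)^k .$$ Then $A_0^{(n)}=\beta^n$ and, for $1\le k<n$, $$A_k^{(n)}=(n-k)\sum_{j=1}^{k}\frac1j\binom{n-1}{j-1}\binom{k-1}{j-1}\alpha^j\beta^{n-j}.$$
   Context: Fix complex numbers $\alpha\neq\beta$. Define polynomials $g_n(x)\in\mathbb{C}[x]$ recursively by $g_0(x)=1$ and, for $n\ge1$, $$(x-\alpha)(\alpha-\beta)^{n-1}g_n(x)=\alpha(x-\beta)^n g_{n-1}(\alpha)-x(\alpha-\beta)^n g_{n-1}(x).$$ (The right-hand side vanishes at $x=\alpha$, so it is divisible by $x-\alpha$ and $g_n$ is a uniquely determined polynomial; for $n\ge1$ it has degree at most $n-1$ in $x$.) *)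

theory Defs
  imports "HOL-Computational_Algebra.Polynomial"
begin

primrec gpoly :: "complex \<Rightarrow> complex \<Rightarrow> nat \<Rightarrow> complex poly" where
  "gpoly a b 0 = 1"
| "gpoly a b (Suc n) =
     (THE p. [:-a, 1:] * smult ((a - b) ^ n) p =
        smult (a * poly (gpoly a b n) a) ([:-b, 1:] ^ Suc n)
        - smult ((a - b) ^ Suc n) ([:0, 1:] * gpoly a b n))"

end

theory Submission
  imports Defs
begin

(* Substituting x = b + (a - b) t, the polynomial G_n(t) = g_n(b + (a - b) t) = \<Sum>k A_k t^k
   satisfies (t - 1) G_(n+1)(t) = a G_n(1) t^(n+1) - (b + (a - b) t) G_n(t), which on coefficients
   says A^(n+1)_k = b A^(n)_k + a \<Sum>i<k A^(n)_i for k \<le> n.  Taking differences in k, the closed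
   form satisfies this as soon as its coefficients of a^j b^(n+1-j) satisfy a four-term identity,
   which follows from Pascal's rule and (m + 1) C(N, m + 1) = (N - m) C(N, m).  Conversely, composing
   the t-recurrence with t = (x - b)/(a - b) gives back the defining recurrence of g_n, whose solution
   is unique for a \<noteq> b. *)

lemma of_nat_Suc_times_binomial_Suc:
  "(1 + of_nat k) * of_nat (n choose Suc k)
     = (of_nat n - of_nat k) * (of_nat (n choose k) :: 'a :: comm_ring_1)"
proof (cases "k \<le> n")
  case True
  have "Suc k * (n choose Suc k) = (n - k) * (n choose k)"
    using binomial_absorb_comp[of n k] binomial_absorption[of k n] by simp
  then show ?thesis
    using True by (metis of_nat_Suc of_nat_diff of_nat_mult)
qed (simp add: binomial_eq_0)

(* gweight n k 0 = 0 only because 1 / 0 = 0; this lets the index shift j \<mapsto> j - 1 in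
   gcoeff_diff run over all j. *)
definition gweight :: "nat \<Rightarrow> nat \<Rightarrow> nat \<Rightarrow> 'a :: field_char_0" where
  "gweight n k j = of_nat (n - k) *
     (1 / of_nat j * of_nat ((n - 1) choose (j - 1)) * of_nat ((k - 1) choose (j - 1)))"

lemma gweight_0 [simp]: "gweight n k 0 = 0"
  by (simp add: gweight_def)

lemma gweight_diff:
  assumes "1 \<le> k" "k < n"
  shows "gweight (Suc n) (Suc k) j - gweight n (Suc k) j - gweight (Suc n) k j + gweight n k j
           = (gweight n k (j - 1) :: 'a :: field_char_0)" (is "?lhs = ?rhs")
proof -
  obtain n' k' where nk: "n = Suc n'" "k = Suc k'" "k' < n'"
    using assms by (intro that[of "n - 1" "k - 1"]) auto
  consider "j = 0" | "j = 1" | m where "j = Suc (Suc m)"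
    by (metis One_nat_def not0_implies_Suc)
  then show ?thesis
  proof cases
    case 3
    define d :: 'a where "d = of_nat n' - of_nat k'"
    define N0 :: 'a where "N0 = of_nat (n' choose Suc m)"
    define N1 :: 'a where "N1 = of_nat (n' choose m)"
    define K0 :: 'a where "K0 = of_nat (k' choose Suc m)"
    define K1 :: 'a where "K1 = of_nat (k' choose m)"
    have lhs: "?lhs = (N0 * K1 - N1 * K0 + d * N1 * K1) / (2 + of_nat m)"
      using 3 nk unfolding gweight_def d_def N0_def N1_def K0_def K1_def
      by (simp flip: diff_divide_distrib add_divide_distrib) (simp add: algebra_simps)
    have rhs: "?rhs = d * N1 * K1 / (1 + of_nat m)"
      using 3 nk unfolding gweight_def d_def N1_def K1_def by simp
    have "(1 + of_nat m) * N0 = (of_nat n' - of_nat m) * N1"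
      "(1 + of_nat m) * K0 = (of_nat k' - of_nat m) * K1"
      unfolding N0_def N1_def K0_def K1_def by (fact of_nat_Suc_times_binomial_Suc)+
    then have key: "(1 + of_nat m) * (N0 * K1 - N1 * K0) = d * N1 * K1"
      unfolding d_def by algebra
    have "(1 + of_nat m :: 'a) \<noteq> 0" "(2 + of_nat m :: 'a) \<noteq> 0"
      using of_nat_neq_0[of m, where 'a='a] of_nat_neq_0[of "Suc m", where 'a='a] by (simp_all add: add_ac)
    moreover have "(N0 * K1 - N1 * K0 + d * N1 * K1) * (1 + of_nat m) = d * N1 * K1 * (2 + of_nat m)"
      using key by algebra
    ultimately show ?thesis
      unfolding lhs rhs by (simp add: frac_eq_eq)
  qed (use nk in \<open>simp_all add: gweight_def\<close>)
qed

definition gcoeff :: "'a :: field_char_0 \<Rightarrow> 'a \<Rightarrow> nat \<Rightarrow> nat \<Rightarrow> 'a" where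
  "gcoeff a b n k = (if k = 0 then b ^ n
     else of_nat (n - k) *
       (\<Sum>j = 1..k. (1 / of_nat j) * of_nat ((n - 1) choose (j - 1))
          * of_nat ((k - 1) choose (j - 1)) * a ^ j * b ^ (n - j)))"

lemma gcoeff_eq_sum_gweight:
  assumes "1 \<le> k" "k \<le> m"
  shows "gcoeff a b n k = (\<Sum>j\<le>m. gweight n k j * a ^ j * b ^ (n - j))"
proof -
  have "gcoeff a b n k = (\<Sum>j = 1..k. gweight n k j * a ^ j * b ^ (n - j))"
    using assms by (simp add: gcoeff_def gweight_def sum_distrib_left mult.assoc)
  also have "\<dots> = (\<Sum>j\<le>m. gweight n k j * a ^ j * b ^ (n - j))"
    using assms by (intro sum.mono_neutral_left) (auto simp: gweight_def not_le)
  finally show ?thesis .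
qed

lemma mult_sum_power_diff_Suc:
  fixes b :: "'a :: comm_semiring_1"
  assumes "m \<le> n"
  shows "b * (\<Sum>j\<le>m. c j * a ^ j * b ^ (n - j)) = (\<Sum>j\<le>m. c j * a ^ j * b ^ (Suc n - j))"
  unfolding sum_distrib_left
proof (rule sum.cong)
  fix j assume "j \<in> {..m}"
  then have "Suc n - j = Suc (n - j)"
    using assms by (simp add: Suc_diff_le)
  then show "b * (c j * a ^ j * b ^ (n - j)) = c j * a ^ j * b ^ (Suc n - j)"
    by (simp add: mult_ac)
qed simp

lemma gcoeff_diff:
  assumes "1 \<le> k" "k < n"
  shows "gcoeff a b (Suc n) (Suc k) - b * gcoeff a b n (Suc k) - gcoeff a b (Suc n) k + b * gcoeff a b n k
           = a * gcoeff a b n k"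
proof -
  have "gcoeff a b (Suc n) (Suc k) - b * gcoeff a b n (Suc k) - gcoeff a b (Suc n) k + b * gcoeff a b n k
      = (\<Sum>j\<le>Suc k. (gweight (Suc n) (Suc k) j - gweight n (Suc k) j - gweight (Suc n) k j + gweight n k j)
                       * a ^ j * b ^ (Suc n - j))"
    using assms
    by (simp add: gcoeff_eq_sum_gweight[where m = "Suc k"] mult_sum_power_diff_Suc del: sum.atMost_Suc)
       (simp add: sum_subtractf sum.distrib algebra_simps del: sum.atMost_Suc)
  also have "\<dots> = (\<Sum>j\<le>Suc k. gweight n k (j - 1) * a ^ j * b ^ (Suc n - j))"
    using assms by (simp add: gweight_diff del: sum.atMost_Suc)
  also have "\<dots> = (\<Sum>j\<le>k. gweight n k j * a ^ Suc j * b ^ (n - j))"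
    by (simp add: sum.atMost_Suc_shift del: sum.atMost_Suc)
  also have "\<dots> = a * gcoeff a b n k"
    using assms by (simp add: gcoeff_eq_sum_gweight[where m = k] sum_distrib_left mult_ac)
  finally show ?thesis .
qed

lemma gcoeff_Suc:
  assumes "1 \<le> n" "k \<le> n"
  shows "gcoeff a b (Suc n) k = b * gcoeff a b n k + a * (\<Sum>i<k. gcoeff a b n i)"
  using assms(2)
proof (induction k)
  case 0
  then show ?case by (simp add: gcoeff_def)
next
  case (Suc k)
  show ?case
  proof (cases "k = 0")
    case True
    then show ?thesis
      using assms(1) by (simp add: gcoeff_def algebra_simps flip: power_Suc)
  next
    case False
    then show ?thesis
      using Suc gcoeff_diff[of k n a b] by (simp add: algebra_simps)
  qed
qed

lemma gcoeff_eq_0: "1 \<le> n \<Longrightarrow> n \<le> k \<Longrightarrow> gcoeff a b n k = 0"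
  by (simp add: gcoeff_def)

definition gcoeff_poly :: "'a :: field_char_0 \<Rightarrow> 'a \<Rightarrow> nat \<Rightarrow> 'a poly" where
  "gcoeff_poly a b n = (\<Sum>k<n. monom (gcoeff a b n k) k)"

lemma coeff_gcoeff_poly: "1 \<le> n \<Longrightarrow> coeff (gcoeff_poly a b n) k = gcoeff a b n k"
  by (auto simp: gcoeff_poly_def coeff_sum coeff_monom not_less gcoeff_eq_0)

lemma poly_gcoeff_poly_1: "poly (gcoeff_poly a b n) 1 = (\<Sum>k<n. gcoeff a b n k)"
  by (simp add: gcoeff_poly_def poly_sum poly_monom)

lemma gcoeff_poly_Suc:
  assumes "1 \<le> n"
  shows "[:-1, 1:] * gcoeff_poly a b (Suc n)
           = monom (a * poly (gcoeff_poly a b n) 1) (Suc n) - [:b, a - b:] * gcoeff_poly a b n"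
proof (rule poly_eqI)
  fix i
  have Suc_n: "1 \<le> Suc n" by simp
  show "coeff ([:-1, 1:] * gcoeff_poly a b (Suc n)) i
      = coeff (monom (a * poly (gcoeff_poly a b n) 1) (Suc n) - [:b, a - b:] * gcoeff_poly a b n) i"
  proof (cases i)
    case 0
    then show ?thesis
      using gcoeff_Suc[OF assms, of 0 a b]
      by (simp add: coeff_gcoeff_poly[OF assms] coeff_gcoeff_poly[OF Suc_n])
  next
    case (Suc j)
    consider "j < n" | "j = n" | "n < j"
      by linarith
    then show ?thesis
    proof cases
      case 1
      then show ?thesis
        using Suc gcoeff_Suc[OF assms, of j a b] gcoeff_Suc[OF assms, of "Suc j" a b]
        by (simp add: coeff_gcoeff_poly[OF assms] coeff_gcoeff_poly[OF Suc_n] algebra_simps)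
    next
      case 2
      then show ?thesis
        using Suc assms gcoeff_Suc[OF assms, of n a b]
        by (simp add: coeff_gcoeff_poly[OF assms] coeff_gcoeff_poly[OF Suc_n] poly_gcoeff_poly_1 gcoeff_eq_0)
    next
      case 3
      then show ?thesis
        using Suc assms
        by (simp add: coeff_gcoeff_poly[OF assms] coeff_gcoeff_poly[OF Suc_n] gcoeff_eq_0)
    qed
  qed
qed

lemma pcompose_monom: "pcompose (monom c k) q = smult c (q ^ k)"
  by (induction k) (simp_all add: monom_0 monom_Suc pcompose_pCons)

definition gclosed :: "'a :: field_char_0 \<Rightarrow> 'a \<Rightarrow> nat \<Rightarrow> 'a poly" where
  "gclosed a b n = pcompose (gcoeff_poly a b n) (smult (inverse (a - b)) [:-b, 1:])"

lemma gclosed_eq_sum: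
  "gclosed a b n = (\<Sum>k<n. smult (gcoeff a b n k / (a - b) ^ k) ([:-b, 1:] ^ k))"
  by (simp add: gclosed_def gcoeff_poly_def pcompose_sum pcompose_monom smult_power
      divide_inverse power_inverse mult.commute del: smult_pCons)

lemma poly_gclosed:
  assumes "a \<noteq> b"
  shows "poly (gclosed a b n) a = poly (gcoeff_poly a b n) 1"
proof -
  have "poly (smult (inverse (a - b)) [:-b, 1:]) a = inverse (a - b) * (a - b)"
    by (simp add: algebra_simps)
  also have "\<dots> = 1"
    using assms by simp
  finally have "poly (smult (inverse (a - b)) [:-b, 1:]) a = 1" .
  then show ?thesis
    by (simp add: gclosed_def poly_pcompose)
qed

definition gpoly_rec :: "'a :: field \<Rightarrow> 'a \<Rightarrow> nat \<Rightarrow> 'a poly \<Rightarrow> 'a poly \<Rightarrow> bool" where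
  "gpoly_rec a b n q p \<longleftrightarrow>
     [:-a, 1:] * smult ((a - b) ^ n) p
       = smult (a * poly q a) ([:-b, 1:] ^ Suc n) - smult ((a - b) ^ Suc n) ([:0, 1:] * q)"

lemma gpoly_rec_unique:
  assumes "a \<noteq> b" "gpoly_rec a b n q p" "gpoly_rec a b n q p'"
  shows "p = p'"
proof -
  have "[:-a, 1:] * smult ((a - b) ^ n) p = [:-a, 1:] * smult ((a - b) ^ n) p'"
    using assms(2,3) by (simp only: gpoly_rec_def)
  moreover have "[:-a, 1:] \<noteq> 0"
    by simp
  ultimately have "smult ((a - b) ^ n) p = smult ((a - b) ^ n) p'"
    using mult_left_cancel by blast
  then show ?thesis
    by (rule smult_cancel[rotated]) (use assms(1) in simp)
qed

lemma gpoly_Suc_eqI: "a \<noteq> b \<Longrightarrow> gpoly_rec a b n (gpoly a b n) p \<Longrightarrow> gpoly a b (Suc n) = p"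
  unfolding gpoly.simps(2) gpoly_rec_def[symmetric]
  by (rule the_equality) (auto intro: gpoly_rec_unique)

lemma gclosed_rec:
  assumes "a \<noteq> b" "1 \<le> n"
  shows "gpoly_rec a b n (gclosed a b n) (gclosed a b (Suc n))"
proof -
  define c where "c = a - b"
  define u where "u = smult (inverse c) [:-b, 1:]"
  have c: "c \<noteq> 0"
    using assms(1) by (simp add: c_def)
  have c_pow: "c ^ Suc n * inverse c = c ^ n"
    using c by (simp add: field_simps)
  have gclosed_u: "gclosed a b m = pcompose (gcoeff_poly a b m) u" for m
    by (simp add: gclosed_def u_def c_def)
  have "pcompose [:-1, 1:] u = smult (inverse c) [:-a, 1:]" "pcompose [:b, c:] u = [:0, 1:]"
    using c by (simp_all add: u_def c_def pcompose_pCons field_simps)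
  moreover have "pcompose ([:-1, 1:] * gcoeff_poly a b (Suc n)) u
      = pcompose (monom (a * poly (gcoeff_poly a b n) 1) (Suc n) - [:b, c:] * gcoeff_poly a b n) u"
    using gcoeff_poly_Suc[OF assms(2), of a b] by (simp only: c_def)
  ultimately have rec_u: "smult (inverse c) [:-a, 1:] * gclosed a b (Suc n)
      = smult (a * poly (gclosed a b n) a) (u ^ Suc n) - [:0, 1:] * gclosed a b n"
    by (simp only: pcompose_mult pcompose_diff pcompose_monom gclosed_u[symmetric] poly_gclosed[OF assms(1)])
  have u_pow: "smult (c ^ Suc n) (u ^ Suc n) = [:-b, 1:] ^ Suc n"
    using c by (simp add: u_def smult_power power_inverse del: smult_pCons power_Suc)
  have "[:-a, 1:] * smult (c ^ n) (gclosed a b (Suc n))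
      = smult (c ^ Suc n) (smult (inverse c) [:-a, 1:] * gclosed a b (Suc n))"
    by (simp only: mult_smult_left mult_smult_right smult_smult c_pow)
  also have "\<dots> = smult (a * poly (gclosed a b n) a) (smult (c ^ Suc n) (u ^ Suc n))
      - smult (c ^ Suc n) ([:0, 1:] * gclosed a b n)"
    unfolding rec_u by (simp only: smult_diff_right smult_smult mult.commute[of "c ^ Suc n"])
  finally show ?thesis
    unfolding gpoly_rec_def u_pow c_def[symmetric] .
qed

lemma gpoly_1:
  assumes "a \<noteq> b"
  shows "gpoly a b 1 = gclosed a b 1"
proof -
  have "gpoly_rec a b 0 (gpoly a b 0) (gclosed a b (Suc 0))"
    by (simp add: gpoly_rec_def gclosed_eq_sum gcoeff_def)
  then show ?thesis
    unfolding One_nat_def by (rule gpoly_Suc_eqI[OF assms])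
qed

lemma gpoly_eq_gclosed:
  assumes "a \<noteq> b" "1 \<le> n"
  shows "gpoly a b n = gclosed a b n"
  using assms(2)
proof (induction n rule: nat_induct_at_least)
  case base
  show ?case
    using assms(1) by (rule gpoly_1)
next
  case (Suc n)
  have "gpoly_rec a b n (gpoly a b n) (gclosed a b (Suc n))"
    using gclosed_rec[OF assms(1) Suc.hyps(1)] by (simp only: Suc.IH)
  then show ?case
    by (rule gpoly_Suc_eqI[OF assms(1)])
qed

theorem mainTheorem4:
  fixes \<alpha> \<beta> :: complex and n :: nat
  assumes "\<alpha> \<noteq> \<beta>" and "n \<ge> 1"
  shows "gpoly \<alpha> \<beta> n =
    (\<Sum>k<n. smult
       ((if k = 0 then \<beta> ^ n
         else of_nat (n - k) *
              (\<Sum>j = 1..k. (1 / of_nat j) * of_nat ((n - 1) choose (j - 1))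
                  * of_nat ((k - 1) choose (j - 1)) * \<alpha> ^ j * \<beta> ^ (n - j)))
        / (\<alpha> - \<beta>) ^ k)
       ([:-\<beta>, 1:] ^ k))"
  using gpoly_eq_gclosed[OF assms] unfolding gclosed_eq_sum gcoeff_def .

end
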